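(* Let $T, N$ be positive integers and $\delta>0$. Let $L\in\mathbb{R}^{T\times T}$ be the lower triangular matrix with $L_{jk}=\delta$ for $k\le j$ and $L_{jk}=0$ for $k>j$, and let $H := (L,\,-L,\,I_T,\,-I_T)\in\mathbb{R}^{4T\times T}$ (vertical stacking). For $i=1,\dots,N$ let $h_i := (\overline{x}_i,\,-\underline{x}_i,\,\overline{u}_i,\,-\underline{u}_i)\in\mathbb{R}^{4T}$ for given vectors $\overline{x}_i,\underline{x}_i,\overline{u}_i,\underline{u}_i\in\mathbb{R}^T$, and suppose each set $\mathbb{U}_i := \{u\in\mathbb{R}^T \mid Hu\le h_i\}$ is nonempty. Let $h_0 := \frac{1}{N}\sum_{i=1}^N h_i$, $\mathbb{U}_0 := \{u\in\mathbb{R}^T\mid Hu\le h_0\}$, and $\mathbb{U} := \mathbb{U}_1+\dots+\mathbb{U}_N$ (Minkowski sum). Let $Q\in\mathbb{R}^{T\times T}$ be invertible. If there exist $\gamma_i\in\mathbb{R}^T$ and $\Lambda_i\in\mathbb{R}^{4T\times 4T}$ for $i=1,\dots,N$ such that $\sum_{i=1}^N\gamma_i = 0$ and, for each $i=1,\dots,N$: $\Lambda_i\ge 0$ (entrywise), $\Lambda_i H = HQ^{-1}$, and $\Lambda_i h_i\le \frac{1}{N}h_0 - H\gamma_i$ (entrywise), then $\mathbb{U}\subseteq Q\mathbb{U}_0$.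
   Context: For a matrix $Q$, $Q\mathbb{X} := \{Qx\mid x\in\mathbb{X}\}$. Vector and matrix inequalities are entrywise. $(A,B)$ denotes vertical stacking of $A$ and $B$. *)

theory Defs
  imports "HOL-Analysis.Analysis"
begin

text \<open>Row index set of size 4T: four copies of the index set 't of size T,
  stacked in the order (first block, second, third, fourth).\<close>
type_synonym 't idx4 = "'t + ('t + ('t + 't))"

definition stack4 :: "('a, 't::finite) vec \<Rightarrow> ('a, 't) vec \<Rightarrow> ('a, 't) vec \<Rightarrow> ('a, 't) vec
    \<Rightarrow> ('a, 't idx4) vec" where
  "stack4 a b c d = (\<chi> k. case k of Inl j \<Rightarrow> a $ j | Inr (Inl j) \<Rightarrow> b $ j
                        | Inr (Inr (Inl j)) \<Rightarrow> c $ j | Inr (Inr (Inr j)) \<Rightarrow> d $ j)"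

definition Lmat :: "real \<Rightarrow> real ^ ('t::{finite,linorder}) ^ ('t::{finite,linorder})" where
  "Lmat \<delta> = (\<chi> j k. if k \<le> j then \<delta> else 0)"

definition Hmat :: "real \<Rightarrow> real ^ ('t::{finite,linorder}) ^ ('t::{finite,linorder}) idx4" where
  "Hmat \<delta> = stack4 (Lmat \<delta>) (- Lmat \<delta>) (mat 1) (- mat 1)"

definition polyU :: "real ^ 't ^ 'm \<Rightarrow> real ^ 'm \<Rightarrow> (real ^ 't) set" where
  "polyU H h = {u. H *v u \<le> h}"

definition minkowski_sum :: "nat \<Rightarrow> (nat \<Rightarrow> ('a::comm_monoid_add) set) \<Rightarrow> 'a set" where
  "minkowski_sum N U = {\<Sum>i\<in>{1..N}. u i | u. \<forall>i\<in>{1..N}. u i \<in> U i}"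

end

theory Submission
  imports Defs
begin

text \<open>Let \<open>u = u\<^sub>1 + \<dots> + u\<^sub>N\<close> with \<open>H u\<^sub>i \<le> h\<^sub>i\<close>. Since \<open>\<Lambda>\<^sub>i H = H Q\<^sup>-\<^sup>1\<close> and
  \<open>\<Lambda>\<^sub>i \<ge> 0\<close>, we get \<open>H Q\<^sup>-\<^sup>1 u\<^sub>i = \<Lambda>\<^sub>i H u\<^sub>i \<le> \<Lambda>\<^sub>i h\<^sub>i \<le> h\<^sub>0/N - H \<gamma>\<^sub>i\<close>; summing over
  \<open>i\<close> the \<open>\<gamma>\<^sub>i\<close> cancel and \<open>H Q\<^sup>-\<^sup>1 u \<le> h\<^sub>0\<close>, i.e. \<open>u \<in> Q \<UU>\<^sub>0\<close>.\<close>

lemma matrix_inv_right: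
  fixes Q :: "'a::semiring_1 ^ 'n ^ 'm"
  assumes "invertible Q"
  shows "Q ** matrix_inv Q = mat 1"
  using someI_ex[OF assms[unfolded invertible_def]] unfolding matrix_inv_def by blast

lemma nonneg_matrix_vector_mult_mono:
  fixes A :: "real ^ 'n ^ 'm"
  assumes "\<forall>j k. A $ j $ k \<ge> 0" and "x \<le> y"
  shows "A *v x \<le> A *v y"
  unfolding less_eq_vec_def
proof
  fix j
  have "(\<Sum>k\<in>UNIV. A $ j $ k * x $ k) \<le> (\<Sum>k\<in>UNIV. A $ j $ k * y $ k)"
    using assms by (intro sum_mono mult_left_mono) (auto simp: less_eq_vec_def)
  then show "(A *v x) $ j \<le> (A *v y) $ j"
    by (simp add: matrix_vector_mult_def)
qed

lemma polyU_multiplier_bound: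
  fixes H :: "real ^ 'n ^ 'm" and \<Lambda> :: "real ^ 'm ^ 'm"
  assumes "u \<in> polyU H h" and "\<forall>j k. \<Lambda> $ j $ k \<ge> 0" and "\<Lambda> ** H = H ** P"
  shows "H *v (P *v u) \<le> \<Lambda> *v h"
proof -
  have "H *v (P *v u) = \<Lambda> *v (H *v u)"
    using assms(3) by (simp add: matrix_vector_mul_assoc)
  also have "\<dots> \<le> \<Lambda> *v h"
    using assms(1,2) by (intro nonneg_matrix_vector_mult_mono) (auto simp: polyU_def)
  finally show ?thesis .
qed

lemma minkowski_sum_polyU_subset_image:
  fixes H :: "real ^ 'n ^ 'm" and Q :: "real ^ 'n ^ 'n" and \<Lambda> :: "nat \<Rightarrow> real ^ 'm ^ 'm"
  assumes Q_inv: "invertible Q"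
    and gamma_sum: "(\<Sum>i\<in>{1..N}. \<gamma> i) = 0"
    and Lambda_nonneg: "\<forall>i\<in>{1..N}. \<forall>j k. \<Lambda> i $ j $ k \<ge> 0"
    and Lambda_H: "\<forall>i\<in>{1..N}. \<Lambda> i ** H = H ** matrix_inv Q"
    and Lambda_h: "\<forall>i\<in>{1..N}. \<Lambda> i *v h i \<le> g i - H *v \<gamma> i"
  shows "minkowski_sum N (\<lambda>i. polyU H (h i)) \<subseteq> (\<lambda>x. Q *v x) ` polyU H (\<Sum>i\<in>{1..N}. g i)"
proof
  fix x assume "x \<in> minkowski_sum N (\<lambda>i. polyU H (h i))"
  then obtain u where x: "x = (\<Sum>i\<in>{1..N}. u i)" and u: "\<forall>i\<in>{1..N}. u i \<in> polyU H (h i)"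
    unfolding minkowski_sum_def by auto
  define v where "v = matrix_inv Q *v x"
  have "H *v v = (\<Sum>i\<in>{1..N}. H *v (matrix_inv Q *v u i))"
    unfolding v_def x by (simp add: vec.sum)
  also have "\<dots> \<le> (\<Sum>i\<in>{1..N}. g i - H *v \<gamma> i)"
    using u Lambda_nonneg Lambda_H Lambda_h
    by (intro sum_mono order_trans[OF polyU_multiplier_bound]) auto
  also have "\<dots> = (\<Sum>i\<in>{1..N}. g i)"
    using gamma_sum by (simp add: sum_subtractf flip: vec.sum)
  finally have "v \<in> polyU H (\<Sum>i\<in>{1..N}. g i)"
    unfolding polyU_def by simp
  moreover have "x = Q *v v"
    unfolding v_def by (simp add: matrix_vector_mul_assoc matrix_inv_right[OF Q_inv])
  ultimately show "x \<in> (\<lambda>x. Q *v x) ` polyU H (\<Sum>i\<in>{1..N}. g i)"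
    by blast
qed

theorem corollary1:
  fixes N :: nat and \<delta> :: real
    and xup xlo uup ulo :: "nat \<Rightarrow> real ^ ('t::{finite,linorder})"
    and Q :: "real ^ ('t::{finite,linorder}) ^ ('t::{finite,linorder})"
    and \<gamma> :: "nat \<Rightarrow> real ^ ('t::{finite,linorder})"
    and \<Lambda> :: "nat \<Rightarrow> real ^ (('t::{finite,linorder}) idx4) ^ (('t::{finite,linorder}) idx4)"
  defines "H \<equiv> Hmat \<delta>"
  defines "h \<equiv> (\<lambda>i. stack4 (xup i) (- xlo i) (uup i) (- ulo i))"
  defines "h0 \<equiv> (1 / real N) *\<^sub>R (\<Sum>i\<in>{1..N}. h i)"
  assumes N_pos: "N \<ge> 1"
    and delta_pos: "\<delta> > 0"
    and nonempty: "\<forall>i\<in>{1..N}. polyU H (h i) \<noteq> {}"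
    and Q_inv: "invertible Q"
    and gamma_sum: "(\<Sum>i\<in>{1..N}. \<gamma> i) = 0"
    and Lambda_nonneg: "\<forall>i\<in>{1..N}. \<forall>j k. \<Lambda> i $ j $ k \<ge> 0"
    and Lambda_H: "\<forall>i\<in>{1..N}. \<Lambda> i ** H = H ** matrix_inv Q"
    and Lambda_h: "\<forall>i\<in>{1..N}. \<Lambda> i *v h i \<le> (1 / real N) *\<^sub>R h0 - H *v \<gamma> i"
  shows "minkowski_sum N (\<lambda>i. polyU H (h i)) \<subseteq> (\<lambda>x. Q *v x) ` polyU H h0"
proof -
  have "(\<Sum>i\<in>{1..N}. (1 / real N) *\<^sub>R h0) = h0"
    using N_pos by (simp only: sum_constant_scaleR card_atLeastAtMost scaleR_scaleR) simp
  with minkowski_sum_polyU_subset_image[OF Q_inv gamma_sum Lambda_nonneg Lambda_H Lambda_h]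
  show ?thesis by simp
qed

end
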